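(* Let $M$ be a nonempty compact convex subset of a locally convex topological vector space $V$, and let $f:M\to M$ be continuous and quasi-affine. Then $f$ is strongly quasi-affine, i.e. $f(\overline{co}\,A)\subseteq\overline{co}\,f(A)$ for every subset $A\subseteq M$.
   Context: For $A\subseteq V$, $co\,A$ denotes the convex hull of $A$ and $\overline{co}\,A$ its closed convex hull. A map $f:M\to M$ is quasi-affine if $f(co\,A)\subseteq co\,f(A)$ for every subset $A\subseteq M$. *)

theory Defs
  imports "HOL-Analysis.Analysis"
begin

definition tvs_topology :: "'a::real_vector topology \<Rightarrow> bool" where
  "tvs_topology T \<longleftrightarrow>
     topspace T = UNIV \<and>
     Hausdorff_space T \<and>
     continuous_map (prod_topology T T) T (\<lambda>(x, y). x + y) \<and>
     continuous_map (prod_topology euclideanreal T) T (\<lambda>(c, x). c *\<^sub>R x)"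

definition locally_convex_tvs :: "'a::real_vector topology \<Rightarrow> bool" where
  "locally_convex_tvs T \<longleftrightarrow>
     tvs_topology T \<and>
     (\<forall>x U. openin T U \<and> x \<in> U \<longrightarrow> (\<exists>W. openin T W \<and> convex W \<and> x \<in> W \<and> W \<subseteq> U))"

definition quasi_affine_on :: "'a::real_vector set \<Rightarrow> ('a \<Rightarrow> 'a) \<Rightarrow> bool" where
  "quasi_affine_on M f \<longleftrightarrow> (\<forall>A. A \<subseteq> M \<longrightarrow> f ` (convex hull A) \<subseteq> convex hull (f ` A))"

definition closed_convex_hull :: "'a::real_vector topology \<Rightarrow> 'a set \<Rightarrow> 'a set" where
  "closed_convex_hull T A = T closure_of (convex hull A)"

definition strongly_quasi_affine_on ::
    "'a::real_vector topology \<Rightarrow> 'a set \<Rightarrow> ('a \<Rightarrow> 'a) \<Rightarrow> bool" where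
  "strongly_quasi_affine_on T M f \<longleftrightarrow>
     (\<forall>A. A \<subseteq> M \<longrightarrow> f ` (closed_convex_hull T A) \<subseteq> closed_convex_hull T (f ` A))"

end

theory Submission
  imports Defs
begin

(* The closed convex hull of A \<subseteq> M stays inside the closed set M, where f is continuous;
   continuity carries closures into closures, and quasi-affinity bounds f ` (convex hull A). *)

lemma continuous_map_image_closure_of_closedin:
  assumes "closedin T M" and "S \<subseteq> M"
    and "continuous_map (subtopology T M) T' f"
  shows "f ` (T closure_of S) \<subseteq> T' closure_of (f ` S)"
proof -
  have "T closure_of S = subtopology T M closure_of S"
    using assms(1,2) closure_of_minimal[OF assms(2,1)]
    by (simp add: closure_of_subtopology inf.absorb2)
  then show ?thesis
    using continuous_map_image_closure_subset[OF assms(3)] by simp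
qed

lemma strongly_quasi_affine_on_closedin:
  assumes "closedin T M" and "convex M"
    and "continuous_map (subtopology T M) T f"
    and "quasi_affine_on M f"
  shows "strongly_quasi_affine_on T M f"
  unfolding strongly_quasi_affine_on_def closed_convex_hull_def
proof (intro allI impI)
  fix A assume "A \<subseteq> M"
  then have "convex hull A \<subseteq> M"
    using assms(2) by (simp add: hull_minimal)
  then have "f ` (T closure_of (convex hull A)) \<subseteq> T closure_of (f ` (convex hull A))"
    using assms(1,3) continuous_map_image_closure_of_closedin by blast
  also have "\<dots> \<subseteq> T closure_of (convex hull (f ` A))"
    using assms(4) \<open>A \<subseteq> M\<close> by (intro closure_of_mono) (simp add: quasi_affine_on_def)
  finally show "f ` (T closure_of (convex hull A)) \<subseteq> T closure_of (convex hull (f ` A))" .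
qed

theorem mainTheorem4:
  fixes T :: "'a::real_vector topology" and M :: "'a set" and f :: "'a \<Rightarrow> 'a"
  assumes "locally_convex_tvs T"
    and "M \<noteq> {}" and "compactin T M" and "convex M"
    and "f ` M \<subseteq> M"
    and "continuous_map (subtopology T M) (subtopology T M) f"
    and "quasi_affine_on M f"
  shows "strongly_quasi_affine_on T M f"
proof (rule strongly_quasi_affine_on_closedin)
  have "Hausdorff_space T"
    using assms(1) by (simp add: locally_convex_tvs_def tvs_topology_def)
  then show "closedin T M"
    using assms(3) by (rule compactin_imp_closedin)
  show "continuous_map (subtopology T M) T f"
    using assms(6) continuous_map_in_subtopology by blast
qed (use assms(4,7) in auto)

end
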